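(* Let $\mathfrak{C}$ be a verification condition provider. (1) Assume that $\mathrm{trans}^{\preceq}_{\mathrm{dwp}}$ preserves $\mathfrak{C}$ and that $\mathfrak{C}$ yields upper bounds for $\mathrm{dwp}$. Then for all $C,C'\in\mathsf{pGCL}$ and all $f\in\mathbb{E}$: if $\mathrm{vc}^{\mathfrak{C},\mathrm{dwp}}[\![C]\!](f)$ holds and $C'\multimap\mathrm{trans}^{\preceq}_{\mathrm{dwp}}[\![C]\!](f)$, then $$\mathrm{dwp}[\![C]\!](f)\le\mathrm{dwp}[\![C']\!](f)\le\mathrm{dwp}^*[\![C]\!](f).$$ (2) Dually, assume that $\mathrm{trans}^{\succeq}_{\mathrm{awp}}$ preserves $\mathfrak{C}$ and that $\mathfrak{C}$ yields lower bounds for $\mathrm{awp}$. Then for all $C,C'\in\mathsf{pGCL}$ and all $f\in\mathbb{E}$: if $\mathrm{vc}^{\mathfrak{C},\mathrm{awp}}[\![C]\!](f)$ holds and $C'\multimap\mathrm{trans}^{\succeq}_{\mathrm{awp}}[\![C]\!](f)$, then $$\mathrm{awp}[\![C]\!](f)\ge\mathrm{awp}[\![C']\!](f)\ge\mathrm{awp}^*[\![C]\!](f).$$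
   Context: States: fix a countably infinite set of program variables with values in $\mathbb{Q}_{\ge 0}$; a state is a map $\sigma$ from variables to $\mathbb{Q}_{\ge0}$ which is $0$ for all but finitely many variables; $\mathsf{States}$ is the set of states. A predicate is a map $\varphi:\mathsf{States}\to\{\mathsf{true},\mathsf{false}\}$; $\varphi\models\psi$ means every state satisfying $\varphi$ satisfies $\psi$; $\models\varphi$ means $\varphi$ holds in every state; $\varphi\Rightarrow\psi$ is the usual implication. Expectations: $\mathbb{E}$ is the set of maps $\mathsf{States}\to[0,\infty]$, ordered pointwise ($\le$, $\ge$); $+,\cdot$ pointwise with $0\cdot\infty=0$; $\sqcap,\sqcup$ pointwise min/max; $[\varphi]$ Iverson bracket; $(\varphi\to g)(\sigma)=g(\sigma)$ if $\sigma\models\varphi$, else $\infty$; $f[x/E](\sigma)=f(\sigma[x\mapsto E(\sigma)])$. Programs of $\mathsf{pGCL}$: $C ::= \mathtt{skip} \mid x:=E \mid C;C \mid \mathtt{if}\ \varphi_1\to C\ \square\ \varphi_2\to C \mid \{C\}[p]\{C\} \mid \mathtt{while}(\varphi)\{C\}[I]$, where $E:\mathsf{States}\to\mathbb{Q}_{\ge0}$, $p:\mathsf{States}\to[0,1]$, in every guarded choice $\varphi_1\vee\varphi_2$ is valid, and every loop carries an invariant annotation $I\in\mathbb{E}$. Weakest preexpectations for $\mathcal{T}\in\{\mathrm{dwp},\mathrm{awp}\}$: $\mathcal{T}[\![\mathtt{skip}]\!](f)=f$; $\mathcal{T}[\![x:=E]\!](f)=f[x/E]$; $\mathcal{T}[\![C_1;C_2]\!](f)=\mathcal{T}[\![C_1]\!](\mathcal{T}[\![C_2]\!](f))$;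 $\mathrm{dwp}$ of a guarded choice: $(\varphi_1\to\mathrm{dwp}[\![C_1]\!](f))\sqcap(\varphi_2\to\mathrm{dwp}[\![C_2]\!](f))$; $\mathrm{awp}$ of a guarded choice: $[\varphi_1]\cdot\mathrm{awp}[\![C_1]\!](f)\sqcup[\varphi_2]\cdot\mathrm{awp}[\![C_2]\!](f)$; $\mathcal{T}[\![\{C_1\}[p]\{C_2\}]\!](f)=p\cdot\mathcal{T}[\![C_1]\!](f)+(1-p)\cdot\mathcal{T}[\![C_2]\!](f)$; loops: least fixpoint of $g\mapsto[\neg\varphi]\cdot f+[\varphi]\cdot\mathcal{T}[\![C']\!](g)$. The auxiliary transformer $\mathcal{T}^*$ follows the same rules except $\mathcal{T}^*[\![\mathtt{while}(\varphi)\{C'\}[I]]\!](f)=I$. Implementation relation $\multimap$: the smallest partial order on $\mathsf{pGCL}$ closed under: if $C_1'\multimap C_1$, $C_2'\multimap C_2$ then $C_1';C_2'\multimap C_1;C_2$ and $\{C_1'\}[p]\{C_2'\}\multimap\{C_1\}[p]\{C_2\}$; if moreover $\varphi_1'\models\varphi_1$, $\varphi_2'\models\varphi_2$, $\models\varphi_1'\vee\varphi_2'$ then $\mathtt{if}\ \varphi_1'\to C_1'\ \square\ \varphi_2'\to C_2'\multimap\mathtt{if}\ \varphi_1\to C_1\ \square\ \varphi_2\to C_2$; if $C'\multimap C$ then $\mathtt{while}(\varphi)\{C'\}\multimap\mathtt{while}(\varphi)\{C\}$. Verification conditions: a verification condition provider is a map $\mathfrak{C}$ assigning to each annotated loop $\mathtt{while}(\varphi)\{C'\}[I]$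 and each $f\in\mathbb{E}$ a truth value. For $\mathcal{T}\in\{\mathrm{dwp},\mathrm{awp}\}$, $\mathrm{vc}^{\mathfrak{C},\mathcal{T}}[\![C]\!](f)\in\{\mathsf{true},\mathsf{false}\}$ is defined inductively: $\mathsf{true}$ for $\mathtt{skip}$ and assignments; $\mathrm{vc}[\![C_1]\!](\mathcal{T}^*[\![C_2]\!](f))\wedge\mathrm{vc}[\![C_2]\!](f)$ for $C_1;C_2$; $\mathrm{vc}[\![C_1]\!](f)\wedge\mathrm{vc}[\![C_2]\!](f)$ for guarded and probabilistic choices; $\mathfrak{C}(\mathtt{while}(\varphi)\{C'\}[I],f)\wedge\mathrm{vc}[\![C']\!](I)$ for loops. $\mathfrak{C}$ yields upper (resp. lower) bounds for $\mathcal{T}$ if for all $C\in\mathsf{pGCL}$ and $f\in\mathbb{E}$, $\mathrm{vc}^{\mathfrak{C},\mathcal{T}}[\![C]\!](f)$ implies $\mathcal{T}[\![C]\!](f)\le\mathcal{T}^*[\![C]\!](f)$ (resp. $\ge$). Comparison predicates: $f\preceq g$ true at $\sigma$ iff $f(\sigma)\le g(\sigma)$; $f\succeq g$ true at $\sigma$ iff $f(\sigma)\ge g(\sigma)$. Transformer $\mathrm{trans}^{\bowtie}_{\mathcal{T}}$ ($\bowtie\in\{\preceq,\succeq\}$), by induction: $\mathtt{skip}$ and assignments unchanged; $C_1;C_2\mapsto \mathrm{trans}^{\bowtie}_{\mathcal{T}}[\![C_1]\!](\mathcal{T}^*[\![C_2]\!](f));\mathrm{trans}^{\bowtie}_{\mathcal{T}}[\![C_2]\!](f)$;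 $\mathtt{if}\ \varphi_1\to C_1\ \square\ \varphi_2\to C_2\mapsto \mathtt{if}\ \psi_1\to\mathrm{trans}^{\bowtie}_{\mathcal{T}}[\![C_1]\!](f)\ \square\ \psi_2\to\mathrm{trans}^{\bowtie}_{\mathcal{T}}[\![C_2]\!](f)$ with $\psi_1=\varphi_1\wedge(\varphi_2\Rightarrow \mathcal{T}^*[\![C_1]\!](f)\bowtie\mathcal{T}^*[\![C_2]\!](f))$, $\psi_2=\varphi_2\wedge(\varphi_1\Rightarrow \mathcal{T}^*[\![C_2]\!](f)\bowtie\mathcal{T}^*[\![C_1]\!](f))$; $\{C_1\}[p]\{C_2\}\mapsto\{\mathrm{trans}^{\bowtie}_{\mathcal{T}}[\![C_1]\!](f)\}[p]\{\mathrm{trans}^{\bowtie}_{\mathcal{T}}[\![C_2]\!](f)\}$; $\mathtt{while}(\varphi)\{C'\}[I]\mapsto\mathtt{while}(\varphi)\{\mathrm{trans}^{\bowtie}_{\mathcal{T}}[\![C']\!](I)\}[I]$. Preservation: $\mathrm{trans}^{\preceq}_{\mathrm{dwp}}$ preserves $\mathfrak{C}$ if for all $C,C'\in\mathsf{pGCL}$, $f\in\mathbb{E}$: $\mathrm{vc}^{\mathfrak{C},\mathrm{dwp}}[\![C]\!](f)$ and $C'\multimap\mathrm{trans}^{\preceq}_{\mathrm{dwp}}[\![C]\!](f)$ imply $\mathrm{vc}^{\mathfrak{C},\mathrm{dwp}}[\![C']\!](f)$; analogously $\mathrm{trans}^{\succeq}_{\mathrm{awp}}$ preserves $\mathfrak{C}$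 with $\mathrm{awp}$ in place of $\mathrm{dwp}$. *)

theory Defs
  imports Main "HOL-Library.Extended_Nonnegative_Real"
begin

typedef state = "{\<sigma> :: nat \<Rightarrow> rat. (\<forall>x. 0 \<le> \<sigma> x) \<and> finite {x. \<sigma> x \<noteq> 0}}"
  by (rule exI[of _ "\<lambda>_. 0"]) simp

type_synonym pred = "state \<Rightarrow> bool"
type_synonym expect = "state \<Rightarrow> ennreal"
type_synonym arith = "state \<Rightarrow> rat"   \<comment> \<open>expressions E; well-formedness demands E \<ge> 0\<close>

definition entails :: "pred \<Rightarrow> pred \<Rightarrow> bool" where
  "entails \<phi> \<psi> \<longleftrightarrow> (\<forall>\<sigma>. \<phi> \<sigma> \<longrightarrow> \<psi> \<sigma>)"

definition valid :: "pred \<Rightarrow> bool" where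
  "valid \<phi> \<longleftrightarrow> (\<forall>\<sigma>. \<phi> \<sigma>)"

definition iver :: "pred \<Rightarrow> expect" where
  "iver \<phi> = (\<lambda>\<sigma>. if \<phi> \<sigma> then 1 else 0)"

definition guard_to :: "pred \<Rightarrow> expect \<Rightarrow> expect" where
  "guard_to \<phi> g = (\<lambda>\<sigma>. if \<phi> \<sigma> then g \<sigma> else \<infinity>)"

definition state_upd :: "state \<Rightarrow> nat \<Rightarrow> rat \<Rightarrow> state" where
  "state_upd \<sigma> x v = Abs_state ((Rep_state \<sigma>)(x := v))"

definition subst :: "expect \<Rightarrow> nat \<Rightarrow> arith \<Rightarrow> expect" where
  "subst f x E = (\<lambda>\<sigma>. f (state_upd \<sigma> x (E \<sigma>)))"

datatype prog =
    Skip
  | Assign nat arith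
  | Seq prog prog
  | IfG pred prog pred prog          \<comment> \<open>if \<phi>1 \<rightarrow> C1 \<box> \<phi>2 \<rightarrow> C2\<close>
  | PChoice prog "state \<Rightarrow> real" prog \<comment> \<open>{C1}[p]{C2}\<close>
  | While pred prog expect           \<comment> \<open>while(\<phi>){C}[I]\<close>

fun wf :: "prog \<Rightarrow> bool" where
  "wf Skip = True"
| "wf (Assign x E) = (\<forall>\<sigma>. 0 \<le> E \<sigma>)"
| "wf (Seq C1 C2) = (wf C1 \<and> wf C2)"
| "wf (IfG \<phi>1 C1 \<phi>2 C2) = (valid (\<lambda>\<sigma>. \<phi>1 \<sigma> \<or> \<phi>2 \<sigma>) \<and> wf C1 \<and> wf C2)"
| "wf (PChoice C1 p C2) = ((\<forall>\<sigma>. 0 \<le> p \<sigma> \<and> p \<sigma> \<le> 1) \<and> wf C1 \<and> wf C2)"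
| "wf (While \<phi> C I) = wf C"

definition pGCL :: "prog set" where
  "pGCL = {C. wf C}"

datatype transformer = DWP | AWP

fun wp :: "transformer \<Rightarrow> prog \<Rightarrow> expect \<Rightarrow> expect" where
  "wp T Skip f = f"
| "wp T (Assign x E) f = subst f x E"
| "wp T (Seq C1 C2) f = wp T C1 (wp T C2 f)"
| "wp T (IfG \<phi>1 C1 \<phi>2 C2) f =
     (case T of
        DWP \<Rightarrow> (\<lambda>\<sigma>. min (guard_to \<phi>1 (wp T C1 f) \<sigma>) (guard_to \<phi>2 (wp T C2 f) \<sigma>))
      | AWP \<Rightarrow> (\<lambda>\<sigma>. max (iver \<phi>1 \<sigma> * wp T C1 f \<sigma>) (iver \<phi>2 \<sigma> * wp T C2 f \<sigma>)))"
| "wp T (PChoice C1 p C2) f =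
     (\<lambda>\<sigma>. ennreal (p \<sigma>) * wp T C1 f \<sigma> + ennreal (1 - p \<sigma>) * wp T C2 f \<sigma>)"
| "wp T (While \<phi> C I) f =
     lfp (\<lambda>g. \<lambda>\<sigma>. iver (\<lambda>\<tau>. \<not> \<phi> \<tau>) \<sigma> * f \<sigma> + iver \<phi> \<sigma> * wp T C g \<sigma>)"

fun wp_star :: "transformer \<Rightarrow> prog \<Rightarrow> expect \<Rightarrow> expect" where
  "wp_star T Skip f = f"
| "wp_star T (Assign x E) f = subst f x E"
| "wp_star T (Seq C1 C2) f = wp_star T C1 (wp_star T C2 f)"
| "wp_star T (IfG \<phi>1 C1 \<phi>2 C2) f =
     (case T of
        DWP \<Rightarrow> (\<lambda>\<sigma>. min (guard_to \<phi>1 (wp_star T C1 f) \<sigma>) (guard_to \<phi>2 (wp_star T C2 f) \<sigma>))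
      | AWP \<Rightarrow> (\<lambda>\<sigma>. max (iver \<phi>1 \<sigma> * wp_star T C1 f \<sigma>) (iver \<phi>2 \<sigma> * wp_star T C2 f \<sigma>)))"
| "wp_star T (PChoice C1 p C2) f =
     (\<lambda>\<sigma>. ennreal (p \<sigma>) * wp_star T C1 f \<sigma> + ennreal (1 - p \<sigma>) * wp_star T C2 f \<sigma>)"
| "wp_star T (While \<phi> C I) f = I"

abbreviation dwp where "dwp \<equiv> wp DWP"
abbreviation awp where "awp \<equiv> wp AWP"
abbreviation dwp_star where "dwp_star \<equiv> wp_star DWP"
abbreviation awp_star where "awp_star \<equiv> wp_star AWP"

inductive impl :: "prog \<Rightarrow> prog \<Rightarrow> bool" where
  impl_refl: "wf C \<Longrightarrow> impl C C"
| impl_trans: "impl C1 C2 \<Longrightarrow> impl C2 C3 \<Longrightarrow> impl C1 C3"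
| impl_seq: "impl C1' C1 \<Longrightarrow> impl C2' C2 \<Longrightarrow> impl (Seq C1' C2') (Seq C1 C2)"
| impl_pchoice: "impl C1' C1 \<Longrightarrow> impl C2' C2 \<Longrightarrow> impl (PChoice C1' p C2') (PChoice C1 p C2)"
| impl_if: "impl C1' C1 \<Longrightarrow> impl C2' C2 \<Longrightarrow> entails \<phi>1' \<phi>1 \<Longrightarrow> entails \<phi>2' \<phi>2 \<Longrightarrow>
            valid (\<lambda>\<sigma>. \<phi>1' \<sigma> \<or> \<phi>2' \<sigma>) \<Longrightarrow> impl (IfG \<phi>1' C1' \<phi>2' C2') (IfG \<phi>1 C1 \<phi>2 C2)"
| impl_while: "impl C' C \<Longrightarrow> impl (While \<phi> C' I) (While \<phi> C I)"

type_synonym vcp = "prog \<Rightarrow> expect \<Rightarrow> bool"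
  \<comment> \<open>only ever applied to annotated loops\<close>

fun vc :: "vcp \<Rightarrow> transformer \<Rightarrow> prog \<Rightarrow> expect \<Rightarrow> bool" where
  "vc \<CC> T Skip f = True"
| "vc \<CC> T (Assign x E) f = True"
| "vc \<CC> T (Seq C1 C2) f = (vc \<CC> T C1 (wp_star T C2 f) \<and> vc \<CC> T C2 f)"
| "vc \<CC> T (IfG \<phi>1 C1 \<phi>2 C2) f = (vc \<CC> T C1 f \<and> vc \<CC> T C2 f)"
| "vc \<CC> T (PChoice C1 p C2) f = (vc \<CC> T C1 f \<and> vc \<CC> T C2 f)"
| "vc \<CC> T (While \<phi> C I) f = (\<CC> (While \<phi> C I) f \<and> vc \<CC> T C I)"

definition yields_upper :: "vcp \<Rightarrow> transformer \<Rightarrow> bool" where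
  "yields_upper \<CC> T \<longleftrightarrow> (\<forall>C\<in>pGCL. \<forall>f. vc \<CC> T C f \<longrightarrow> wp T C f \<le> wp_star T C f)"

definition yields_lower :: "vcp \<Rightarrow> transformer \<Rightarrow> bool" where
  "yields_lower \<CC> T \<longleftrightarrow> (\<forall>C\<in>pGCL. \<forall>f. vc \<CC> T C f \<longrightarrow> wp T C f \<ge> wp_star T C f)"

text \<open>The comparison \<bowtie> is a relation on ennreal: (\<le>) for \<preceq>, (\<ge>) for \<succeq>.\<close>
fun transf :: "(ennreal \<Rightarrow> ennreal \<Rightarrow> bool) \<Rightarrow> transformer \<Rightarrow> prog \<Rightarrow> expect \<Rightarrow> prog" where
  "transf R T Skip f = Skip"
| "transf R T (Assign x E) f = Assign x E"
| "transf R T (Seq C1 C2) f = Seq (transf R T C1 (wp_star T C2 f)) (transf R T C2 f)"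
| "transf R T (IfG \<phi>1 C1 \<phi>2 C2) f =
     IfG (\<lambda>\<sigma>. \<phi>1 \<sigma> \<and> (\<phi>2 \<sigma> \<longrightarrow> R (wp_star T C1 f \<sigma>) (wp_star T C2 f \<sigma>))) (transf R T C1 f)
         (\<lambda>\<sigma>. \<phi>2 \<sigma> \<and> (\<phi>1 \<sigma> \<longrightarrow> R (wp_star T C2 f \<sigma>) (wp_star T C1 f \<sigma>))) (transf R T C2 f)"
| "transf R T (PChoice C1 p C2) f = PChoice (transf R T C1 f) p (transf R T C2 f)"
| "transf R T (While \<phi> C I) f = While \<phi> (transf R T C I) I"

abbreviation trans_dwp_le where "trans_dwp_le \<equiv> transf (\<le>) DWP"
abbreviation trans_awp_ge where "trans_awp_ge \<equiv> transf (\<ge>) AWP"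

definition preserves :: "(ennreal \<Rightarrow> ennreal \<Rightarrow> bool) \<Rightarrow> transformer \<Rightarrow> vcp \<Rightarrow> bool" where
  "preserves R T \<CC> \<longleftrightarrow>
     (\<forall>C\<in>pGCL. \<forall>C'\<in>pGCL. \<forall>f. vc \<CC> T C f \<and> impl C' (transf R T C f) \<longrightarrow> vc \<CC> T C' f)"

end

theory Submission
  imports Defs
begin

text \<open>Every implementation C' of trans C has the shape of C, with the same assignments,
probabilities, loop guards and invariants, and guards of guarded choices that are only
strengthened. Strengthening guards removes demonic (angelic) options, so dwp can only grow
(awp only shrink) along this relation; applied to C' and to trans C this gives the first
inequality. The new guards of trans C only keep branches whose dwp* (awp*) value is optimal,
so C' has the same dwp* (awp*) as C; since vc is preserved and yields upper (lower) bounds,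
the second inequality follows.\<close>

text \<open>A recursive over-approximation of impl, which unlike impl can be inverted by
simplification.\<close>

fun strengthens_guards :: "prog \<Rightarrow> prog \<Rightarrow> bool" where
  "strengthens_guards Skip Skip = True"
| "strengthens_guards (Assign x E) (Assign y F) = (x = y \<and> E = F)"
| "strengthens_guards (Seq C1' C2') (Seq C1 C2) =
     (strengthens_guards C1' C1 \<and> strengthens_guards C2' C2)"
| "strengthens_guards (IfG \<phi>1' C1' \<phi>2' C2') (IfG \<phi>1 C1 \<phi>2 C2) =
     (entails \<phi>1' \<phi>1 \<and> entails \<phi>2' \<phi>2 \<and> valid (\<lambda>\<sigma>. \<phi>1' \<sigma> \<or> \<phi>2' \<sigma>) \<and>
      strengthens_guards C1' C1 \<and> strengthens_guards C2' C2)"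
| "strengthens_guards (PChoice C1' p' C2') (PChoice C1 p C2) =
     (p' = p \<and> strengthens_guards C1' C1 \<and> strengthens_guards C2' C2)"
| "strengthens_guards (While \<phi>' C' I') (While \<phi> C I) =
     (\<phi>' = \<phi> \<and> I' = I \<and> strengthens_guards C' C)"
| "strengthens_guards _ _ = False"

lemma strengthens_guards_refl: "wf C \<Longrightarrow> strengthens_guards C C"
  by (induction C) (auto simp: entails_def)

lemma strengthens_guards_trans:
  "strengthens_guards A B \<Longrightarrow> strengthens_guards B C \<Longrightarrow> strengthens_guards A C"
  by (induction A B arbitrary: C rule: strengthens_guards.induct)
    (auto elim: strengthens_guards.elims simp: entails_def)

lemma impl_strengthens_guards: "impl C' C \<Longrightarrow> strengthens_guards C' C"
  by (induction rule: impl.induct) (auto intro: strengthens_guards_refl strengthens_guards_trans)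

lemma transf_strengthens_guards:
  assumes "\<And>a b. R a b \<or> R b a" and "wf C"
  shows "strengthens_guards (transf R T C f) C"
  using assms(2)
proof (induction C arbitrary: f)
  case (IfG \<phi>1 C1 \<phi>2 C2)
  then show ?case using assms(1) by (auto simp: entails_def valid_def)
qed auto

lemma guard_to_antimono: "entails \<phi> \<psi> \<Longrightarrow> g \<le> h \<Longrightarrow> guard_to \<psi> g \<le> guard_to \<phi> h"
  by (auto simp: guard_to_def entails_def le_fun_def)

lemma iver_mult_mono: "entails \<phi> \<psi> \<Longrightarrow> g \<le> h \<Longrightarrow> iver \<phi> \<sigma> * g \<sigma> \<le> iver \<psi> \<sigma> * h \<sigma>"
  by (auto simp: iver_def entails_def le_fun_def)

lemma dwp_antimono_strengthens_guards:
  "strengthens_guards C' C \<Longrightarrow> f \<le> g \<Longrightarrow> dwp C f \<le> dwp C' g"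
proof (induction C' C arbitrary: f g rule: strengthens_guards.induct)
  case (2 x E y F)
  then show ?case by (auto simp: subst_def le_fun_def)
next
  case (4 \<phi>1' C1' \<phi>2' C2' \<phi>1 C1 \<phi>2 C2)
  then have "guard_to \<phi>1 (dwp C1 f) \<le> guard_to \<phi>1' (dwp C1' g)"
    and "guard_to \<phi>2 (dwp C2 f) \<le> guard_to \<phi>2' (dwp C2' g)"
    by (simp_all add: guard_to_antimono)
  then show ?case by (auto simp: le_fun_def intro: min.coboundedI1 min.coboundedI2)
next
  case (5 C1' p' C2' C1 p C2)
  then show ?case by (auto simp: le_fun_def intro!: add_mono mult_left_mono)
next
  case (6 \<phi>' C' I' \<phi> C I)
  then have "dwp C Z \<le> dwp C' Z" for Z by simp
  with 6 show ?case
    by simp (rule lfp_mono, auto simp: le_fun_def intro!: add_mono mult_left_mono)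
qed auto

lemma awp_mono_strengthens_guards:
  "strengthens_guards C' C \<Longrightarrow> f \<le> g \<Longrightarrow> awp C' f \<le> awp C g"
proof (induction C' C arbitrary: f g rule: strengthens_guards.induct)
  case (2 x E y F)
  then show ?case by (auto simp: subst_def le_fun_def)
next
  case (4 \<phi>1' C1' \<phi>2' C2' \<phi>1 C1 \<phi>2 C2)
  then have "iver \<phi>1' \<sigma> * awp C1' f \<sigma> \<le> iver \<phi>1 \<sigma> * awp C1 g \<sigma>"
    and "iver \<phi>2' \<sigma> * awp C2' f \<sigma> \<le> iver \<phi>2 \<sigma> * awp C2 g \<sigma>" for \<sigma>
    by (simp_all add: iver_mult_mono)
  then show ?case by (auto simp: le_fun_def intro: max.coboundedI1 max.coboundedI2)
next
  case (5 C1' p' C2' C1 p C2)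
  then show ?case by (auto simp: le_fun_def intro!: add_mono mult_left_mono)
next
  case (6 \<phi>' C' I' \<phi> C I)
  then have "awp C' Z \<le> awp C Z" for Z by simp
  with 6 show ?case
    by simp (rule lfp_mono, auto simp: le_fun_def intro!: add_mono mult_left_mono)
qed auto

lemma dwp_star_transf_invariant:
  "strengthens_guards C' (trans_dwp_le C f) \<Longrightarrow> dwp_star C' f = dwp_star C f"
proof (induction C arbitrary: C' f)
  case (IfG \<phi>1 C1 \<phi>2 C2)
  then obtain \<psi>1 C1' \<psi>2 C2' where C': "C' = IfG \<psi>1 C1' \<psi>2 C2'"
    by (cases C') auto
  with IfG have "dwp_star C1' f = dwp_star C1 f" and "dwp_star C2' f = dwp_star C2 f"
    and "entails \<psi>1 (\<lambda>\<sigma>. \<phi>1 \<sigma> \<and> (\<phi>2 \<sigma> \<longrightarrow> dwp_star C1 f \<sigma> \<le> dwp_star C2 f \<sigma>))"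
    and "entails \<psi>2 (\<lambda>\<sigma>. \<phi>2 \<sigma> \<and> (\<phi>1 \<sigma> \<longrightarrow> dwp_star C2 f \<sigma> \<le> dwp_star C1 f \<sigma>))"
    and "valid (\<lambda>\<sigma>. \<psi>1 \<sigma> \<or> \<psi>2 \<sigma>)"
    by auto
  then show ?case
    unfolding C' by (auto simp: fun_eq_iff guard_to_def entails_def valid_def min_def top_unique)
qed (auto elim: strengthens_guards.elims)

lemma awp_star_transf_invariant:
  "strengthens_guards C' (trans_awp_ge C f) \<Longrightarrow> awp_star C' f = awp_star C f"
proof (induction C arbitrary: C' f)
  case (IfG \<phi>1 C1 \<phi>2 C2)
  then obtain \<psi>1 C1' \<psi>2 C2' where C': "C' = IfG \<psi>1 C1' \<psi>2 C2'"
    by (cases C') auto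
  with IfG have "awp_star C1' f = awp_star C1 f" and "awp_star C2' f = awp_star C2 f"
    and "entails \<psi>1 (\<lambda>\<sigma>. \<phi>1 \<sigma> \<and> (\<phi>2 \<sigma> \<longrightarrow> awp_star C1 f \<sigma> \<ge> awp_star C2 f \<sigma>))"
    and "entails \<psi>2 (\<lambda>\<sigma>. \<phi>2 \<sigma> \<and> (\<phi>1 \<sigma> \<longrightarrow> awp_star C2 f \<sigma> \<ge> awp_star C1 f \<sigma>))"
    and "valid (\<lambda>\<sigma>. \<psi>1 \<sigma> \<or> \<psi>2 \<sigma>)"
    by auto
  then show ?case
    unfolding C' by (auto simp: fun_eq_iff iver_def entails_def valid_def max_def)
qed (auto elim: strengthens_guards.elims)

lemma trans_dwp_le_bounds:
  assumes "preserves (\<le>) DWP \<CC>" and "yields_upper \<CC> DWP"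
    and "C \<in> pGCL" and "C' \<in> pGCL"
    and "vc \<CC> DWP C f" and "impl C' (trans_dwp_le C f)"
  shows "dwp C f \<le> dwp C' f \<and> dwp C' f \<le> dwp_star C f"
proof
  have C'_transf: "strengthens_guards C' (trans_dwp_le C f)"
    using assms(6) by (rule impl_strengthens_guards)
  have transf_C: "strengthens_guards (trans_dwp_le C f) C"
    using assms(3) by (intro transf_strengthens_guards) (auto simp: pGCL_def)
  have "dwp C f \<le> dwp (trans_dwp_le C f) f"
    using transf_C by (simp add: dwp_antimono_strengthens_guards)
  also have "\<dots> \<le> dwp C' f"
    using C'_transf by (simp add: dwp_antimono_strengthens_guards)
  finally show "dwp C f \<le> dwp C' f" .
  have "vc \<CC> DWP C' f"
    using assms(1,3-6) unfolding preserves_def by blast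
  then have "dwp C' f \<le> dwp_star C' f"
    using assms(2,4) unfolding yields_upper_def by blast
  then show "dwp C' f \<le> dwp_star C f"
    using dwp_star_transf_invariant[OF C'_transf] by simp
qed

lemma trans_awp_ge_bounds:
  assumes "preserves (\<ge>) AWP \<CC>" and "yields_lower \<CC> AWP"
    and "C \<in> pGCL" and "C' \<in> pGCL"
    and "vc \<CC> AWP C f" and "impl C' (trans_awp_ge C f)"
  shows "awp C f \<ge> awp C' f \<and> awp C' f \<ge> awp_star C f"
proof
  have C'_transf: "strengthens_guards C' (trans_awp_ge C f)"
    using assms(6) by (rule impl_strengthens_guards)
  have transf_C: "strengthens_guards (trans_awp_ge C f) C"
    using assms(3) by (intro transf_strengthens_guards) (auto simp: pGCL_def)
  have "awp C' f \<le> awp (trans_awp_ge C f) f"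
    using C'_transf by (simp add: awp_mono_strengthens_guards)
  also have "\<dots> \<le> awp C f"
    using transf_C by (simp add: awp_mono_strengthens_guards)
  finally show "awp C f \<ge> awp C' f" .
  have "vc \<CC> AWP C' f"
    using assms(1,3-6) unfolding preserves_def by blast
  then have "awp_star C' f \<le> awp C' f"
    using assms(2,4) unfolding yields_lower_def by blast
  then show "awp C' f \<ge> awp_star C f"
    using awp_star_transf_invariant[OF C'_transf] by simp
qed

theorem theorem6p5:
  fixes \<CC> :: vcp
  shows
   "(preserves (\<le>) DWP \<CC> \<and> yields_upper \<CC> DWP \<longrightarrow>
      (\<forall>C\<in>pGCL. \<forall>C'\<in>pGCL. \<forall>f.
         vc \<CC> DWP C f \<and> impl C' (trans_dwp_le C f) \<longrightarrow>
         dwp C f \<le> dwp C' f \<and> dwp C' f \<le> dwp_star C f))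
  \<and> (preserves (\<ge>) AWP \<CC> \<and> yields_lower \<CC> AWP \<longrightarrow>
      (\<forall>C\<in>pGCL. \<forall>C'\<in>pGCL. \<forall>f.
         vc \<CC> AWP C f \<and> impl C' (trans_awp_ge C f) \<longrightarrow>
         awp C f \<ge> awp C' f \<and> awp C' f \<ge> awp_star C f))"
  using trans_dwp_le_bounds trans_awp_ge_bounds by blast

end
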